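(* Let $G=(V,E,w)$ be a finite unweighted symmetric graph, i.e. $V$ is a finite set, $w:V\times V\to\{0,1\}$ with $w(i,j)=w(j,i)$, $E=\{(i,j): w(i,j)\neq 0\}$, and $N(i)=\{j\in V: (i,j)\in E\}$. Let $V_0\subseteq V$ be a set of boundary nodes, and let the potential function be constant, $\rho(i)=1$ for all $i\in V$. Suppose $f:V\to\mathbb{R}$ satisfies the generalized geodesic distance equation with the supremum norm ($p=\infty$): $$\rho(i)\,\|(\nabla^-_w f)(i)\|_\infty = 1 \quad \text{for } i\in V\setminus V_0,\qquad f(i)=0 \quad \text{for } i\in V_0.$$ Then $f$ satisfies the shortest-path (Dijkstra) distance equation $$f(i)=\min_{j\in N(i)}\{f(j)+1\}\quad \text{for } i\in V\setminus V_0,\qquad f(i)=0\quad\text{for } i\in V_0.$$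
   Context: For $a\in\mathbb{R}$, $(a)_+=\max\{a,0\}$ and $(a)_-=-\min\{a,0\}$. The negative directional graph difference operator is $(d^-_w f)(i,j)=\sqrt{w(i,j)}\,(f(j)-f(i))_-$ for $i,j\in V$, and the negative graph gradient at $i$ is the vector $(\nabla^-_w f)(i)=[(d^-_w f)(i,j): j\in V]^T$. Its supremum norm is $\|(\nabla^-_w f)(i)\|_\infty=\max_{j\in V}|(d^-_w f)(i,j)|$. *)

theory Defs
  imports Complex_Main
begin

definition neg_part :: "real \<Rightarrow> real" where
  "neg_part a = - min a 0"

definition dneg :: "('a \<Rightarrow> 'a \<Rightarrow> real) \<Rightarrow> ('a \<Rightarrow> real) \<Rightarrow> 'a \<Rightarrow> 'a \<Rightarrow> real" where
  "dneg w f i j = sqrt (w i j) * neg_part (f j - f i)"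

definition grad_neg_sup :: "'a set \<Rightarrow> ('a \<Rightarrow> 'a \<Rightarrow> real) \<Rightarrow> ('a \<Rightarrow> real) \<Rightarrow> 'a \<Rightarrow> real" where
  "grad_neg_sup V w f i = Max ((\<lambda>j. \<bar>dneg w f i j\<bar>) ` V)"

definition nbhd :: "'a set \<Rightarrow> ('a \<Rightarrow> 'a \<Rightarrow> real) \<Rightarrow> 'a \<Rightarrow> 'a set" where
  "nbhd V w i = {j \<in> V. w i j \<noteq> 0}"

end

theory Submission
  imports Defs
begin

text \<open>For 0/1 weights the negative gradient at i only sees the neighbours of i, each
  contributing its drop f i - f j (or 0); since i itself lies in V, the sup norm of the
  gradient is the largest drop to a neighbour, floored at 0. The eikonal equation
  therefore says that no neighbour lies more than 1 below f i and some neighbour lies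
  exactly 1 below it, which is the shortest-path recursion.\<close>

lemma abs_dneg_unweighted:
  assumes "w i j \<in> {0, 1}"
  shows "\<bar>dneg w f i j\<bar> = (if w i j = 0 then 0 else max 0 (f i - f j))"
  using assms unfolding dneg_def neg_part_def by auto

lemma grad_neg_sup_unweighted:
  assumes "finite V" and "i \<in> V" and "\<forall>j\<in>V. w i j \<in> {0, 1}"
  shows "grad_neg_sup V w f i = Max (insert 0 ((\<lambda>j. f i - f j) ` nbhd V w i))"
    (is "_ = Max ?D")
proof (rule antisym)
  have fin_D: "finite ?D"
    using assms(1) unfolding nbhd_def by simp
  have fin_S: "finite ((\<lambda>j. \<bar>dneg w f i j\<bar>) ` V)" and ne_S: "(\<lambda>j. \<bar>dneg w f i j\<bar>) ` V \<noteq> {}"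
    using assms(1,2) by auto
  show "grad_neg_sup V w f i \<le> Max ?D"
    unfolding grad_neg_sup_def
  proof (rule Max.boundedI[OF fin_S ne_S], clarify)
    fix j assume "j \<in> V"
    then show "\<bar>dneg w f i j\<bar> \<le> Max ?D"
      using assms(3) fin_D abs_dneg_unweighted[of w i j f]
      by (auto simp: nbhd_def intro: Max_ge)
  qed
  have "\<bar>dneg w f i j\<bar> \<le> grad_neg_sup V w f i" if "j \<in> V" for j
    unfolding grad_neg_sup_def using fin_S that by (intro Max_ge) auto
  then show "Max ?D \<le> grad_neg_sup V w f i"
    using assms(2,3) fin_D abs_dneg_unweighted[of w i _ f]
    by (intro Max.boundedI) (force simp: nbhd_def)+
qed

lemma eq_Min_plus_one_if_max_drop_one:
  fixes g :: "'a \<Rightarrow> real"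
  assumes "finite N" and "Max (insert 0 ((\<lambda>j. c - g j) ` N)) = 1"
  shows "c = Min ((\<lambda>j. g j + 1) ` N)"
proof -
  have fin: "finite (insert 0 ((\<lambda>j. c - g j) ` N))"
    using assms(1) by simp
  have "1 \<in> insert 0 ((\<lambda>j. c - g j) ` N)"
    using Max_in[OF fin] assms(2) by fastforce
  then obtain j where "j \<in> N" and "c = g j + 1"
    by auto
  moreover have "c \<le> g k + 1" if "k \<in> N" for k
    using Max_ge[OF fin, of "c - g k"] assms(2) that by simp
  ultimately show ?thesis
    using assms(1) by (intro Min_eqI[symmetric]) auto
qed

theorem proposition1:
  fixes V V0 :: "'a set" and w :: "'a \<Rightarrow> 'a \<Rightarrow> real"
    and rho f :: "'a \<Rightarrow> real"
  assumes "finite V"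
    and "\<forall>i\<in>V. \<forall>j\<in>V. w i j \<in> {0, 1}"
    and "\<forall>i\<in>V. \<forall>j\<in>V. w i j = w j i"
    and "V0 \<subseteq> V"
    and "\<forall>i\<in>V. rho i = 1"
    and "\<forall>i\<in>V - V0. rho i * grad_neg_sup V w f i = 1"
    and "\<forall>i\<in>V0. f i = 0"
  shows "(\<forall>i\<in>V - V0. f i = Min ((\<lambda>j. f j + 1) ` nbhd V w i))
         \<and> (\<forall>i\<in>V0. f i = 0)"
proof -
  have "f i = Min ((\<lambda>j. f j + 1) ` nbhd V w i)" if i: "i \<in> V - V0" for i
  proof (rule eq_Min_plus_one_if_max_drop_one)
    show "finite (nbhd V w i)"
      using assms(1) unfolding nbhd_def by simp
    have "grad_neg_sup V w f i = 1"
      using assms(5,6) i by auto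
    then show "Max (insert 0 ((\<lambda>j. f i - f j) ` nbhd V w i)) = 1"
      using grad_neg_sup_unweighted[OF assms(1), of i w f] assms(2) i by simp
  qed
  then show ?thesis
    using assms(7) by blast
qed

end
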